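(* For every $n\geq1$, $$\sum_{\sigma\in\mathfrak S_n}(xy)^{{\rm M}(\sigma)}\Bigl(\frac{x+y}{2}\Bigr)^{n-2{\rm M}(\sigma)-1}\alpha^{{\rm LRmin}(\sigma)-1}\beta^{{\rm RLmin}(\sigma)-1}=\sum_{\sigma\in\mathfrak S_n}x^{{\rm des}(\sigma)}y^{n-{\rm des}(\sigma)-1}\Bigl(\frac{\alpha+\beta}{2}\Bigr)^{{\rm LRmin}(\sigma)+{\rm RLmin}(\sigma)-2}.$$
   Context: For $\sigma=\sigma_1\cdots\sigma_n\in\mathfrak S_n$: ${\rm des}(\sigma)$ is the number of $i\in[n-1]$ with $\sigma_i>\sigma_{i+1}$; ${\rm M}(\sigma)$ is the number of $i$ with $1<i<n$ and $\sigma_{i-1}<\sigma_i>\sigma_{i+1}$; ${\rm LRmin}(\sigma)$ is the number of $i$ with $\sigma_j>\sigma_i$ for all $j<i$; ${\rm RLmin}(\sigma)$ is the number of $i$ with $\sigma_j>\sigma_i$ for all $j>i$. Here $x,y,\alpha,\beta$ are indeterminates. *)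

theory Defs
  imports "HOL-Combinatorics.Permutations"
begin

text \<open>A permutation sigma of [n] is a function with sigma permutes {1..n};
  sigma i is the entry at position i (one-line notation sigma_1 ... sigma_n).\<close>

definition des :: "nat \<Rightarrow> (nat \<Rightarrow> nat) \<Rightarrow> nat" where
  "des n \<sigma> = card {i \<in> {1..n-1}. \<sigma> i > \<sigma> (i+1)}"

definition peaks :: "nat \<Rightarrow> (nat \<Rightarrow> nat) \<Rightarrow> nat" where
  "peaks n \<sigma> = card {i. 1 < i \<and> i < n \<and> \<sigma> (i-1) < \<sigma> i \<and> \<sigma> i > \<sigma> (i+1)}"

definition LRmin :: "nat \<Rightarrow> (nat \<Rightarrow> nat) \<Rightarrow> nat" where
  "LRmin n \<sigma> = card {i \<in> {1..n}. \<forall>j \<in> {1..<i}. \<sigma> j > \<sigma> i}"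

definition RLmin :: "nat \<Rightarrow> (nat \<Rightarrow> nat) \<Rightarrow> nat" where
  "RLmin n \<sigma> = card {i \<in> {1..n}. \<forall>j \<in> {i<..n}. \<sigma> j > \<sigma> i}"

end

theory Submission
  imports Defs "HOL-Computational_Algebra.Polynomial"
begin

(* Every permutation of [n+1] arises exactly once by inserting the letter n+1 into one of the
   n+1 gaps of a permutation of [n].  The first (last) gap creates a new left-to-right
   (right-to-left) minimum, and no other gap changes these minima.  The end gaps keep the number
   of peaks; of the n-1 interior gaps, the 2M next to one of the M peaks keep it too and the
   others create a new peak.  The first gap creates a descent, the last one does not, and an
   interior gap does unless it splits a descent.  Consequently both sides F n x y of the
   identity satisfy
     F (n+1) x y = (\<alpha> + \<beta>) (x + y)/2 F n x y + x y (d/dx + d/dy) F n x y.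
   The operator d/dx + d/dy is the linear coefficient of the polynomial t |-> F n (x+t) (y+t),
   so equality of F n for all x, y forces equality of these derivatives, and induction on n
   proves the identity. *)

section \<open>Inserting the maximal letter\<close>

definition insert_max :: "nat \<Rightarrow> (nat \<Rightarrow> nat) \<Rightarrow> nat \<Rightarrow> nat \<Rightarrow> nat" where
  "insert_max n \<sigma> j i =
     (if i \<le> j then \<sigma> i else if i = Suc j then Suc n else if i \<le> Suc n then \<sigma> (i - 1) else i)"

lemma insert_max_below [simp]: "i \<le> j \<Longrightarrow> insert_max n \<sigma> j i = \<sigma> i"
  by (simp add: insert_max_def)

lemma insert_max_at [simp]: "insert_max n \<sigma> j (Suc j) = Suc n"
  by (simp add: insert_max_def)

lemma insert_max_above [simp]: "Suc j < i \<Longrightarrow> i \<le> Suc n \<Longrightarrow> insert_max n \<sigma> j i = \<sigma> (i - 1)"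
  by (simp add: insert_max_def)

lemma permutes_atLeastAtMost_range:
  "\<sigma> permutes {1..n} \<Longrightarrow> 1 \<le> i \<Longrightarrow> i \<le> n \<Longrightarrow> 1 \<le> \<sigma> i \<and> \<sigma> i \<le> n"
  using permutes_in_image[of \<sigma> "{1..n}" i] by auto

lemma insert_max_le:
  assumes "\<sigma> permutes {1..n}" "j \<le> n" "i \<le> Suc n" "i \<noteq> Suc j"
  shows "insert_max n \<sigma> j i \<le> n"
  using assms permutes_atLeastAtMost_range[OF assms(1), of i]
    permutes_atLeastAtMost_range[OF assms(1), of "i - 1"] permutes_not_in[OF assms(1), of 0]
  by (cases "i = 0") (auto simp: insert_max_def)

lemma insert_max_eq_Suc_iff:
  assumes "\<sigma> permutes {1..n}" "j \<le> n" "i \<le> Suc n"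
  shows "insert_max n \<sigma> j i = Suc n \<longleftrightarrow> i = Suc j"
  using insert_max_le[OF assms] by fastforce

lemma insert_max_range:
  assumes p: "\<sigma> permutes {1..n}" and "j \<le> n" "1 \<le> i" "i \<le> Suc n"
  shows "1 \<le> insert_max n \<sigma> j i \<and> insert_max n \<sigma> j i \<le> Suc n"
proof -
  consider "i \<le> j" | "i = Suc j" | "Suc j < i" by linarith
  then show ?thesis
  proof cases
    case 1
    then show ?thesis using assms permutes_atLeastAtMost_range[OF p, of i] by simp
  next
    case 3
    then have "1 \<le> i - 1" "i - 1 \<le> n" using assms by auto
    then show ?thesis using 3 assms permutes_atLeastAtMost_range[OF p, of "i - 1"] by simp
  qed simp
qed

lemma insert_max_permutes:
  assumes p: "\<sigma> permutes {1..n}" and j: "j \<le> n"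
  shows "insert_max n \<sigma> j permutes {1..Suc n}"
proof (rule bij_imp_permutes)
  define pos where "pos i = (if i \<le> j then i else i - 1)" for i
  have old: "insert_max n \<sigma> j i = \<sigma> (pos i)" if "i \<le> Suc n" "i \<noteq> Suc j" for i
    using that by (simp add: insert_max_def pos_def)
  have inj: "inj_on (insert_max n \<sigma> j) {1..Suc n}"
  proof (rule inj_onI)
    fix a b assume a: "a \<in> {1..Suc n}" and b: "b \<in> {1..Suc n}"
      and eq: "insert_max n \<sigma> j a = insert_max n \<sigma> j b"
    show "a = b"
    proof (cases "a = Suc j \<or> b = Suc j")
      case True
      then show ?thesis
        using eq insert_max_eq_Suc_iff[OF p j, of a] insert_max_eq_Suc_iff[OF p j, of b] a b
        by (metis atLeastAtMost_iff insert_max_at)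
    next
      case False
      then have "\<sigma> (pos a) = \<sigma> (pos b)"
        using eq a b old by simp
      then have "pos a = pos b"
        using permutes_inj[OF p] by (simp add: inj_def)
      then show ?thesis using False a b by (simp add: pos_def split: if_splits)
    qed
  qed
  have "insert_max n \<sigma> j ` {1..Suc n} \<subseteq> {1..Suc n}"
    using insert_max_range[OF p j] by auto
  then show "bij_betw (insert_max n \<sigma> j) {1..Suc n} {1..Suc n}"
    using endo_inj_surj[OF _ _ inj] inj by (auto simp: bij_betw_def)
  show "insert_max n \<sigma> j i = i" if "i \<notin> {1..Suc n}" for i
    using that j permutes_not_in[OF p, of 0] by (cases "i = 0") (auto simp: insert_max_def)
qed

lemma insert_max_inject:
  assumes p: "\<sigma> permutes {1..n}" "\<sigma>' permutes {1..n}" and j: "j \<le> n" "j' \<le> n"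
    and eq: "insert_max n \<sigma> j = insert_max n \<sigma>' j'"
  shows "\<sigma> = \<sigma>' \<and> j = j'"
proof -
  have "insert_max n \<sigma>' j' (Suc j) = Suc n"
    using eq by (metis insert_max_at)
  then have jj: "j = j'"
    using insert_max_eq_Suc_iff[OF p(2) j(2), of "Suc j"] j by simp
  have "\<sigma> i = \<sigma>' i" for i
  proof -
    consider "i \<le> j" | "j < i" "i \<le> n" | "n < i" by linarith
    then show ?thesis
    proof cases
      case 1
      then show ?thesis using fun_cong[OF eq, of i] jj by simp
    next
      case 2
      then show ?thesis using fun_cong[OF eq, of "Suc i"] jj by simp
    next
      case 3
      then show ?thesis using permutes_not_in[OF p(1), of i] permutes_not_in[OF p(2), of i] by auto
    qed
  qed
  then show ?thesis using jj by auto
qed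

lemma sum_permutes_Suc:
  "(\<Sum>\<tau> | \<tau> permutes {1..Suc n}. f \<tau>) =
     (\<Sum>\<sigma> | \<sigma> permutes {1..n}. \<Sum>j = 0..n. f (insert_max n \<sigma> j))"
proof -
  define S where "S = {\<sigma>. \<sigma> permutes {1..n}}"
  define T where "T = {\<tau>. \<tau> permutes {1..Suc n}}"
  define g where "g = (\<lambda>(\<sigma>, j). insert_max n \<sigma> j)"
  have inj: "inj_on g (S \<times> {0..n})"
  proof (rule inj_onI)
    fix p q assume "p \<in> S \<times> {0..n}" "q \<in> S \<times> {0..n}" "g p = g q"
    then show "p = q"
      using insert_max_inject[of "fst p" n "fst q" "snd p" "snd q"]
      by (auto simp: g_def S_def split: prod.splits)
  qed
  have sub: "g ` (S \<times> {0..n}) \<subseteq> T"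
    using insert_max_permutes by (auto simp: g_def S_def T_def simp del: One_nat_def)
  have "card (g ` (S \<times> {0..n})) = card T"
    using card_image[OF inj]
    by (simp add: S_def T_def card_permutations card_cartesian_product algebra_simps)
  then have "g ` (S \<times> {0..n}) = T"
    using card_subset_eq[OF _ sub] by (simp add: T_def finite_permutations)
  then have "(\<Sum>\<tau>\<in>T. f \<tau>) = (\<Sum>(\<sigma>, j)\<in>S \<times> {0..n}. f (insert_max n \<sigma> j))"
    using sum.reindex[OF inj, of f] by (simp add: g_def prod.case_distrib)
  then show ?thesis
    by (simp add: S_def T_def sum.cartesian_product)
qed

section \<open>The statistics under insertion\<close>

definition is_LRmin :: "(nat \<Rightarrow> nat) \<Rightarrow> nat \<Rightarrow> bool" where
  "is_LRmin \<sigma> i \<longleftrightarrow> (\<forall>k \<in> {1..<i}. \<sigma> i < \<sigma> k)"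

definition is_RLmin :: "nat \<Rightarrow> (nat \<Rightarrow> nat) \<Rightarrow> nat \<Rightarrow> bool" where
  "is_RLmin n \<sigma> i \<longleftrightarrow> (\<forall>k \<in> {i<..n}. \<sigma> i < \<sigma> k)"

definition is_peak :: "nat \<Rightarrow> (nat \<Rightarrow> nat) \<Rightarrow> nat \<Rightarrow> bool" where
  "is_peak n \<sigma> i \<longleftrightarrow> 1 < i \<and> i < n \<and> \<sigma> (i - 1) < \<sigma> i \<and> \<sigma> (Suc i) < \<sigma> i"

lemma LRmin_eq_card: "LRmin n \<sigma> = card {i \<in> {1..n}. is_LRmin \<sigma> i}"
  by (simp add: LRmin_def is_LRmin_def)

lemma RLmin_eq_card: "RLmin n \<sigma> = card {i \<in> {1..n}. is_RLmin n \<sigma> i}"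
  by (simp add: RLmin_def is_RLmin_def)

lemma des_eq_card: "des n \<sigma> = card {i \<in> {1..n - 1}. \<sigma> (Suc i) < \<sigma> i}"
  by (simp add: des_def)

lemma peaks_eq_card: "peaks n \<sigma> = card {i \<in> {1..n}. is_peak n \<sigma> i}"
  unfolding peaks_def is_peak_def by (rule arg_cong[where f = card]) auto

lemma LRmin_pos: "1 \<le> n \<Longrightarrow> 1 \<le> LRmin n \<sigma>"
  using card_mono[of "{i \<in> {1..n}. is_LRmin \<sigma> i}" "{1}"]
  by (simp add: LRmin_eq_card is_LRmin_def)

lemma RLmin_pos: "1 \<le> n \<Longrightarrow> 1 \<le> RLmin n \<sigma>"
  using card_mono[of "{i \<in> {1..n}. is_RLmin n \<sigma> i}" "{n}"]
  by (simp add: RLmin_eq_card is_RLmin_def)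

lemma des_le: "des n \<sigma> \<le> n - 1"
proof -
  have "des n \<sigma> \<le> card {1..n - 1}"
    unfolding des_eq_card by (rule card_mono) auto
  then show ?thesis by simp
qed

text \<open>Each peak occupies the two gaps next to it, and no gap is next to two peaks.\<close>

lemma card_gaps_next_to_peak:
  "card {j \<in> {1..n - 1}. is_peak n \<sigma> j \<or> is_peak n \<sigma> (Suc j)} = 2 * peaks n \<sigma>"
proof -
  define K where "K = {i \<in> {1..n}. is_peak n \<sigma> i}"
  have "{j \<in> {1..n - 1}. is_peak n \<sigma> j \<or> is_peak n \<sigma> (Suc j)} = K \<union> (\<lambda>i. i - 1) ` K"
  proof (intro set_eqI iffI)
    fix j assume j: "j \<in> {j \<in> {1..n - 1}. is_peak n \<sigma> j \<or> is_peak n \<sigma> (Suc j)}"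
    show "j \<in> K \<union> (\<lambda>i. i - 1) ` K"
    proof (cases "is_peak n \<sigma> j")
      case False
      then have "Suc j \<in> K" using j by (auto simp: K_def is_peak_def)
      then show ?thesis by (metis UnI2 diff_Suc_1 imageI)
    qed (use j in \<open>auto simp: K_def\<close>)
  next
    fix j assume "j \<in> K \<union> (\<lambda>i. i - 1) ` K"
    then show "j \<in> {j \<in> {1..n - 1}. is_peak n \<sigma> j \<or> is_peak n \<sigma> (Suc j)}"
      by (auto simp: K_def is_peak_def Suc_pred)
  qed
  moreover have "K \<inter> (\<lambda>i. i - 1) ` K = {}"
    by (auto simp: K_def is_peak_def Suc_pred)
  moreover have "inj_on (\<lambda>i. i - 1) K"
    by (auto simp: K_def is_peak_def inj_on_def)
  moreover have "finite K"
    by (simp add: K_def)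
  ultimately show ?thesis
    by (simp add: card_Un_disjoint card_image peaks_eq_card K_def)
qed

lemma double_peaks_le: "2 * peaks n \<sigma> \<le> n - 1"
proof -
  have "2 * peaks n \<sigma> \<le> card {1..n - 1}"
    unfolding card_gaps_next_to_peak[symmetric] by (rule card_mono) auto
  then show ?thesis by simp
qed

text \<open>Positions before the gap keep their letters and positions after the window \<open>j, j+1, j+2\<close>
  of the new word carry the letters of the old word shifted by one, so a statistic counting
  positions changes only inside the window (\<open>j, j+1\<close> in the old word).\<close>

lemma card_shift_outside_window:
  fixes P Q :: "nat \<Rightarrow> bool"
  assumes "j \<le> N"
    and below: "\<And>i. 1 \<le> i \<Longrightarrow> i < j \<Longrightarrow> Q i = P i"
    and above: "\<And>i. Suc (Suc j) < i \<Longrightarrow> i \<le> Suc N \<Longrightarrow> Q i = P (i - 1)"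
  shows "card ({i \<in> {1..Suc N}. Q i} - {j, Suc j, Suc (Suc j)}) = card ({i \<in> {1..N}. P i} - {j, Suc j})"
proof (rule bij_betw_same_card[of "\<lambda>i. if i < j then i else i - 1"], rule bij_betw_imageI)
  let ?shift = "\<lambda>i::nat. if i < j then i else i - 1"
  let ?A = "{i \<in> {1..Suc N}. Q i} - {j, Suc j, Suc (Suc j)}" and ?B = "{i \<in> {1..N}. P i} - {j, Suc j}"
  show "inj_on ?shift ?A"
    by (auto simp: inj_on_def)
  show "?shift ` ?A = ?B"
  proof
    show "?shift ` ?A \<subseteq> ?B"
    proof
      fix k assume "k \<in> ?shift ` ?A"
      then obtain i where i: "i \<in> ?A" "k = ?shift i" by blast
      show "k \<in> ?B"
      proof (cases "i < j")
        case True
        then show ?thesis using i below assms(1) by auto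
      next
        case False
        then have "Suc (Suc j) < i" using i by auto
        then show ?thesis using i above[of i] by auto
      qed
    qed
    show "?B \<subseteq> ?shift ` ?A"
    proof
      fix i assume i: "i \<in> ?B"
      show "i \<in> ?shift ` ?A"
      proof (cases "i < j")
        case True
        then have "i \<in> ?A" "?shift i = i" using i below by auto
        then show ?thesis by force
      next
        case False
        then have "Suc i \<in> ?A" "?shift (Suc i) = i" using i above[of "Suc i"] by auto
        then show ?thesis by force
      qed
    qed
  qed
qed

lemma card_insertion_shift:
  fixes P Q :: "nat \<Rightarrow> bool"
  assumes "j \<le> N"
    and "\<And>i. 1 \<le> i \<Longrightarrow> i < j \<Longrightarrow> Q i = P i"
    and "\<And>i. Suc (Suc j) < i \<Longrightarrow> i \<le> Suc N \<Longrightarrow> Q i = P (i - 1)"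
  shows "card {i \<in> {1..Suc N}. Q i}
           + (if 1 \<le> j \<and> P j then 1 else 0) + (if Suc j \<le> N \<and> P (Suc j) then 1 else 0)
       = card {i \<in> {1..N}. P i}
           + (if 1 \<le> j \<and> Q j then 1 else 0) + (if Q (Suc j) then 1 else 0)
           + (if Suc (Suc j) \<le> Suc N \<and> Q (Suc (Suc j)) then 1 else 0)"
proof -
  define A where "A = {i \<in> {1..Suc N}. Q i}"
  define B where "B = {i \<in> {1..N}. P i}"
  have "card (A - {j, Suc j, Suc (Suc j)}) = card (B - {j, Suc j})"
    unfolding A_def B_def using assms by (rule card_shift_outside_window)
  then have "card A - card (A \<inter> {j, Suc j, Suc (Suc j)}) = card B - card (B \<inter> {j, Suc j})"
    by (simp add: card_Diff_subset_Int A_def B_def)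
  moreover have "card (A \<inter> {j, Suc j, Suc (Suc j)}) \<le> card A" "card (B \<inter> {j, Suc j}) \<le> card B"
    by (auto intro: card_mono simp: A_def B_def)
  moreover have "card (A \<inter> {j, Suc j, Suc (Suc j)}) = (if 1 \<le> j \<and> Q j then 1 else 0)
      + (if Q (Suc j) then 1 else 0) + (if Suc (Suc j) \<le> Suc N \<and> Q (Suc (Suc j)) then 1 else 0)"
    using assms(1) by (simp add: A_def Int_insert_right)
  moreover have "card (B \<inter> {j, Suc j}) = (if 1 \<le> j \<and> P j then 1 else 0)
      + (if Suc j \<le> N \<and> P (Suc j) then 1 else 0)"
    using assms(1) by (simp add: B_def Int_insert_right)
  ultimately show ?thesis
    unfolding A_def B_def by linarith
qed

lemma is_LRmin_insert_max_below: "i \<le> j \<Longrightarrow> is_LRmin (insert_max n \<sigma> j) i \<longleftrightarrow> is_LRmin \<sigma> i"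
  by (simp add: is_LRmin_def)

lemma is_LRmin_insert_max_at:
  assumes p: "\<sigma> permutes {1..n}" and j: "j \<le> n"
  shows "is_LRmin (insert_max n \<sigma> j) (Suc j) \<longleftrightarrow> j = 0"
proof (cases "j = 0")
  case False
  then have "insert_max n \<sigma> j j \<le> n"
    using permutes_atLeastAtMost_range[OF p, of j] j by simp
  then show ?thesis
    using False by (auto simp: is_LRmin_def intro!: bexI[of _ j])
qed (simp add: is_LRmin_def)

lemma is_LRmin_insert_max_above:
  assumes p: "\<sigma> permutes {1..n}" and i: "Suc j < i" "i \<le> Suc n"
  shows "is_LRmin (insert_max n \<sigma> j) i \<longleftrightarrow> is_LRmin \<sigma> (i - 1)"
proof
  assume new: "is_LRmin (insert_max n \<sigma> j) i"
  show "is_LRmin \<sigma> (i - 1)"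
    unfolding is_LRmin_def
  proof
    fix k assume k: "k \<in> {1..<i - 1}"
    show "\<sigma> (i - 1) < \<sigma> k"
    proof (cases "k \<le> j")
      case True
      then show ?thesis using bspec[OF new[unfolded is_LRmin_def], of k] k i by simp
    next
      case False
      then show ?thesis using bspec[OF new[unfolded is_LRmin_def], of "Suc k"] k i by simp
    qed
  qed
next
  assume old: "is_LRmin \<sigma> (i - 1)"
  show "is_LRmin (insert_max n \<sigma> j) i"
    unfolding is_LRmin_def
  proof
    fix k assume k: "k \<in> {1..<i}"
    consider "k \<le> j" | "k = Suc j" | "Suc j < k" by linarith
    then show "insert_max n \<sigma> j i < insert_max n \<sigma> j k"
    proof cases
      case 1
      then show ?thesis using old k i by (auto simp: is_LRmin_def)
    next
      case 2
      have "1 \<le> i - 1" "i - 1 \<le> n" using i by auto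
      then show ?thesis using 2 i permutes_atLeastAtMost_range[OF p, of "i - 1"] by simp
    next
      case 3
      then have "k - 1 \<in> {1..<i - 1}" using k by auto
      then show ?thesis using old 3 k i by (simp add: is_LRmin_def)
    qed
  qed
qed

lemma LRmin_insert_max:
  assumes p: "\<sigma> permutes {1..n}" and j: "j \<le> n"
  shows "LRmin (Suc n) (insert_max n \<sigma> j) = LRmin n \<sigma> + (if j = 0 then 1 else 0)"
proof -
  let ?P = "is_LRmin \<sigma>" and ?Q = "is_LRmin (insert_max n \<sigma> j)"
  have "card {i \<in> {1..Suc n}. ?Q i}
           + (if 1 \<le> j \<and> ?P j then 1 else 0) + (if Suc j \<le> n \<and> ?P (Suc j) then 1 else 0)
       = card {i \<in> {1..n}. ?P i}
           + (if 1 \<le> j \<and> ?Q j then 1 else 0) + (if ?Q (Suc j) then 1 else 0)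
           + (if Suc (Suc j) \<le> Suc n \<and> ?Q (Suc (Suc j)) then 1 else 0)"
    using j by (rule card_insertion_shift)
      (simp_all add: is_LRmin_insert_max_below is_LRmin_insert_max_above[OF p])
  then show ?thesis
    using is_LRmin_insert_max_at[OF p j] is_LRmin_insert_max_above[OF p, of j "Suc (Suc j)"]
    by (simp add: LRmin_eq_card is_LRmin_insert_max_below split: if_splits)
qed

lemma is_RLmin_insert_max_below:
  assumes p: "\<sigma> permutes {1..n}" and i: "1 \<le> i" "i \<le> j" "j \<le> n"
  shows "is_RLmin (Suc n) (insert_max n \<sigma> j) i \<longleftrightarrow> is_RLmin n \<sigma> i"
proof
  assume new: "is_RLmin (Suc n) (insert_max n \<sigma> j) i"
  show "is_RLmin n \<sigma> i"
    unfolding is_RLmin_def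
  proof
    fix k assume k: "k \<in> {i<..n}"
    show "\<sigma> i < \<sigma> k"
    proof (cases "k \<le> j")
      case True
      then show ?thesis using bspec[OF new[unfolded is_RLmin_def], of k] k i by simp
    next
      case False
      then show ?thesis using bspec[OF new[unfolded is_RLmin_def], of "Suc k"] k i by simp
    qed
  qed
next
  assume old: "is_RLmin n \<sigma> i"
  show "is_RLmin (Suc n) (insert_max n \<sigma> j) i"
    unfolding is_RLmin_def
  proof
    fix k assume k: "k \<in> {i<..Suc n}"
    consider "k \<le> j" | "k = Suc j" | "Suc j < k" by linarith
    then show "insert_max n \<sigma> j i < insert_max n \<sigma> j k"
    proof cases
      case 1
      then show ?thesis using old k i by (auto simp: is_RLmin_def)
    next
      case 2
      then show ?thesis using i permutes_atLeastAtMost_range[OF p, of i] by simp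
    next
      case 3
      then have "k - 1 \<in> {i<..n}" using k i by auto
      then show ?thesis using old 3 k i by (simp add: is_RLmin_def)
    qed
  qed
qed

lemma is_RLmin_insert_max_at:
  assumes p: "\<sigma> permutes {1..n}" and j: "j \<le> n"
  shows "is_RLmin (Suc n) (insert_max n \<sigma> j) (Suc j) \<longleftrightarrow> j = n"
proof (cases "j = n")
  case False
  then have "insert_max n \<sigma> j (Suc (Suc j)) \<le> n"
    using permutes_atLeastAtMost_range[OF p, of "Suc j"] j by simp
  then show ?thesis
    using False j by (auto simp: is_RLmin_def intro!: bexI[of _ "Suc (Suc j)"])
qed (simp add: is_RLmin_def)

lemma is_RLmin_insert_max_above:
  assumes i: "Suc j < i" "i \<le> Suc n"
  shows "is_RLmin (Suc n) (insert_max n \<sigma> j) i \<longleftrightarrow> is_RLmin n \<sigma> (i - 1)"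
proof
  assume new: "is_RLmin (Suc n) (insert_max n \<sigma> j) i"
  show "is_RLmin n \<sigma> (i - 1)"
    unfolding is_RLmin_def
  proof
    fix k assume "k \<in> {i - 1<..n}"
    then have "Suc k \<in> {i<..Suc n}" using i by auto
    then show "\<sigma> (i - 1) < \<sigma> k" using bspec[OF new[unfolded is_RLmin_def]] i by fastforce
  qed
next
  assume old: "is_RLmin n \<sigma> (i - 1)"
  show "is_RLmin (Suc n) (insert_max n \<sigma> j) i"
    unfolding is_RLmin_def
  proof
    fix k assume k: "k \<in> {i<..Suc n}"
    then have "k - 1 \<in> {i - 1<..n}" using i by auto
    then show "insert_max n \<sigma> j i < insert_max n \<sigma> j k"
      using old k i by (simp add: is_RLmin_def)
  qed
qed

lemma RLmin_insert_max:
  assumes p: "\<sigma> permutes {1..n}" and j: "j \<le> n"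
  shows "RLmin (Suc n) (insert_max n \<sigma> j) = RLmin n \<sigma> + (if j = n then 1 else 0)"
proof -
  let ?P = "is_RLmin n \<sigma>" and ?Q = "is_RLmin (Suc n) (insert_max n \<sigma> j)"
  have "card {i \<in> {1..Suc n}. ?Q i}
           + (if 1 \<le> j \<and> ?P j then 1 else 0) + (if Suc j \<le> n \<and> ?P (Suc j) then 1 else 0)
       = card {i \<in> {1..n}. ?P i}
           + (if 1 \<le> j \<and> ?Q j then 1 else 0) + (if ?Q (Suc j) then 1 else 0)
           + (if Suc (Suc j) \<le> Suc n \<and> ?Q (Suc (Suc j)) then 1 else 0)"
    using j by (rule card_insertion_shift)
      (simp_all add: is_RLmin_insert_max_below[OF p _ _ j] is_RLmin_insert_max_above)
  then show ?thesis
    using is_RLmin_insert_max_at[OF p j] is_RLmin_insert_max_below[OF p _ order_refl j]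
      is_RLmin_insert_max_above[of j "Suc (Suc j)"]
    by (simp add: RLmin_eq_card split: if_splits)
qed

lemma des_insert_max:
  assumes p: "\<sigma> permutes {1..n}" and j: "j \<le> n" and n: "1 \<le> n"
  shows "des (Suc n) (insert_max n \<sigma> j) =
           (if j = n \<or> (1 \<le> j \<and> \<sigma> (Suc j) < \<sigma> j) then des n \<sigma> else Suc (des n \<sigma>))"
proof (cases "j = n")
  case True
  have "{i \<in> {1..n}. insert_max n \<sigma> j (Suc i) < insert_max n \<sigma> j i}
      = {i \<in> {1..n - 1}. \<sigma> (Suc i) < \<sigma> i}"
  proof (intro set_eqI)
    fix i
    show "i \<in> {i \<in> {1..n}. insert_max n \<sigma> j (Suc i) < insert_max n \<sigma> j i}
      \<longleftrightarrow> i \<in> {i \<in> {1..n - 1}. \<sigma> (Suc i) < \<sigma> i}"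
      using True permutes_atLeastAtMost_range[OF p, of i] by (cases "i = n") auto
  qed
  then show ?thesis
    using True by (simp add: des_eq_card)
next
  case False
  define N where "N = n - 1"
  have N: "Suc N = n" "j \<le> N" using n j False by (auto simp: N_def)
  let ?P = "\<lambda>i. \<sigma> (Suc i) < \<sigma> i"
  let ?Q = "\<lambda>i. insert_max n \<sigma> j (Suc i) < insert_max n \<sigma> j i"
  have "card {i \<in> {1..Suc N}. ?Q i}
           + (if 1 \<le> j \<and> ?P j then 1 else 0) + (if Suc j \<le> N \<and> ?P (Suc j) then 1 else 0)
       = card {i \<in> {1..N}. ?P i}
           + (if 1 \<le> j \<and> ?Q j then 1 else 0) + (if ?Q (Suc j) then 1 else 0)
           + (if Suc (Suc j) \<le> Suc N \<and> ?Q (Suc (Suc j)) then 1 else 0)"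
  proof (rule card_insertion_shift[OF N(2)])
    fix i assume "1 \<le> i" "i < j"
    then show "?Q i = ?P i" by simp
  next
    fix i assume "Suc (Suc j) < i" "i \<le> Suc N"
    then show "?Q i = ?P (i - 1)" using N by simp
  qed
  moreover have "1 \<le> j \<Longrightarrow> \<not> ?Q j"
    using permutes_atLeastAtMost_range[OF p, of j] j by simp
  moreover have "?Q (Suc j)"
    using permutes_atLeastAtMost_range[OF p, of "Suc j"] N by simp
  moreover have "Suc (Suc j) \<le> Suc N \<Longrightarrow> ?Q (Suc (Suc j)) = ?P (Suc j)"
    using N by simp
  ultimately show ?thesis
    using N False by (simp add: des_eq_card N_def split: if_splits)
qed

lemma not_is_peak_Suc: "is_peak n \<sigma> j \<Longrightarrow> \<not> is_peak n \<sigma> (Suc j)"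
  by (simp add: is_peak_def)

lemma peaks_insert_max_count:
  assumes p: "\<sigma> permutes {1..n}" and j: "j \<le> n"
  shows "peaks (Suc n) (insert_max n \<sigma> j)
           + (if is_peak n \<sigma> j then 1 else 0) + (if is_peak n \<sigma> (Suc j) then 1 else 0)
       = peaks n \<sigma> + (if 1 \<le> j \<and> j < n then 1 else 0)"
proof -
  let ?P = "is_peak n \<sigma>" and ?Q = "is_peak (Suc n) (insert_max n \<sigma> j)"
  have "card {i \<in> {1..Suc n}. ?Q i}
           + (if 1 \<le> j \<and> ?P j then 1 else 0) + (if Suc j \<le> n \<and> ?P (Suc j) then 1 else 0)
       = card {i \<in> {1..n}. ?P i}
           + (if 1 \<le> j \<and> ?Q j then 1 else 0) + (if ?Q (Suc j) then 1 else 0)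
           + (if Suc (Suc j) \<le> Suc n \<and> ?Q (Suc (Suc j)) then 1 else 0)"
  proof (rule card_insertion_shift[OF j])
    fix i assume "1 \<le> i" "i < j"
    then show "?Q i = ?P i" using j by (simp add: is_peak_def)
  next
    fix i assume i: "Suc (Suc j) < i" "i \<le> Suc n"
    show "?Q i = ?P (i - 1)"
    proof (cases "i = Suc n")
      case False
      then have "Suc (i - 1) = i" "i - 1 - 1 = i - 2" "1 < i - 1" "i - 1 < n" using i by auto
      then show ?thesis using i False by (simp add: is_peak_def del: One_nat_def)
    qed (simp add: is_peak_def)
  qed
  moreover have "1 \<le> j \<Longrightarrow> \<not> ?Q j"
    using permutes_atLeastAtMost_range[OF p, of j] j by (simp add: is_peak_def)
  moreover have "?Q (Suc j) \<longleftrightarrow> 1 \<le> j \<and> j < n"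
    using permutes_atLeastAtMost_range[OF p, of "Suc j"] permutes_atLeastAtMost_range[OF p, of j] j
    by (auto simp: is_peak_def)
  moreover have "Suc (Suc j) \<le> Suc n \<Longrightarrow> \<not> ?Q (Suc (Suc j))"
    using permutes_atLeastAtMost_range[OF p, of "Suc j"] by (simp add: is_peak_def)
  moreover have "\<not> ?P 0" "\<not> Suc 0 \<le> j \<Longrightarrow> \<not> ?P j" "\<not> ?P n" "Suc j > n \<Longrightarrow> \<not> ?P (Suc j)"
    by (auto simp: is_peak_def)
  ultimately show ?thesis
    using j unfolding peaks_eq_card by (auto split: if_splits)
qed

lemma peaks_insert_max:
  assumes p: "\<sigma> permutes {1..n}" and j: "j \<le> n"
  shows "peaks (Suc n) (insert_max n \<sigma> j) =
           (if j = 0 \<or> j = n \<or> is_peak n \<sigma> j \<or> is_peak n \<sigma> (Suc j) then peaks n \<sigma>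
            else Suc (peaks n \<sigma>))"
proof (cases "j = 0 \<or> j = n")
  case True
  then have "\<not> is_peak n \<sigma> j" "\<not> is_peak n \<sigma> (Suc j)"
    by (auto simp: is_peak_def)
  then show ?thesis
    using peaks_insert_max_count[OF p j] True by auto
next
  case False
  then have "1 \<le> j \<and> j < n"
    using j by auto
  then show ?thesis
    using peaks_insert_max_count[OF p j] False not_is_peak_Suc[of n \<sigma> j]
    by (cases "is_peak n \<sigma> j"; cases "is_peak n \<sigma> (Suc j)") auto
qed

section \<open>The two weights and their recurrences\<close>

definition peak_weight :: "nat \<Rightarrow> 'a::field_char_0 \<Rightarrow> 'a \<Rightarrow> 'a \<Rightarrow> 'a \<Rightarrow> (nat \<Rightarrow> nat) \<Rightarrow> 'a" where
  "peak_weight n x y \<alpha> \<beta> \<sigma> = (x * y) ^ peaks n \<sigma> * ((x + y) / 2) ^ (n - 2 * peaks n \<sigma> - 1)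
     * \<alpha> ^ (LRmin n \<sigma> - 1) * \<beta> ^ (RLmin n \<sigma> - 1)"

definition descent_weight :: "nat \<Rightarrow> 'a::field_char_0 \<Rightarrow> 'a \<Rightarrow> 'a \<Rightarrow> 'a \<Rightarrow> (nat \<Rightarrow> nat) \<Rightarrow> 'a" where
  "descent_weight n x y \<alpha> \<beta> \<sigma> = x ^ des n \<sigma> * y ^ (n - des n \<sigma> - 1)
     * ((\<alpha> + \<beta>) / 2) ^ (LRmin n \<sigma> + RLmin n \<sigma> - 2)"

definition peak_weight_poly :: "nat \<Rightarrow> 'a::field_char_0 \<Rightarrow> 'a \<Rightarrow> 'a \<Rightarrow> 'a \<Rightarrow> (nat \<Rightarrow> nat) \<Rightarrow> 'a poly" where
  "peak_weight_poly n x y \<alpha> \<beta> \<sigma> = smult (\<alpha> ^ (LRmin n \<sigma> - 1) * \<beta> ^ (RLmin n \<sigma> - 1))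
     ([:x * y, x + y, 1:] ^ peaks n \<sigma> * [:(x + y) / 2, 1:] ^ (n - 2 * peaks n \<sigma> - 1))"

definition descent_weight_poly :: "nat \<Rightarrow> 'a::field_char_0 \<Rightarrow> 'a \<Rightarrow> 'a \<Rightarrow> 'a \<Rightarrow> (nat \<Rightarrow> nat) \<Rightarrow> 'a poly" where
  "descent_weight_poly n x y \<alpha> \<beta> \<sigma> = smult (((\<alpha> + \<beta>) / 2) ^ (LRmin n \<sigma> + RLmin n \<sigma> - 2))
     ([:x, 1:] ^ des n \<sigma> * [:y, 1:] ^ (n - des n \<sigma> - 1))"

lemma poly_peak_weight_poly:
  "poly (peak_weight_poly n x y \<alpha> \<beta> \<sigma>) t = peak_weight n (x + t) (y + t) \<alpha> \<beta> \<sigma>"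
proof -
  have prod: "poly [:x * y, x + y, 1:] t = (x + t) * (y + t)"
    by (simp add: algebra_simps)
  have mean: "poly [:(x + y) / 2, 1:] t = ((x + t) + (y + t)) / 2"
    by (simp add: field_simps)
  show ?thesis
    unfolding peak_weight_poly_def peak_weight_def poly_smult poly_mult poly_power prod mean
    by (simp add: ac_simps)
qed

lemma poly_descent_weight_poly:
  "poly (descent_weight_poly n x y \<alpha> \<beta> \<sigma>) t = descent_weight n (x + t) (y + t) \<alpha> \<beta> \<sigma>"
  by (simp add: descent_weight_poly_def descent_weight_def ac_simps)

lemma coeff_mult_1: "coeff (p * q) 1 = coeff p 0 * coeff q 1 + coeff p 1 * coeff q 0"
  by (simp add: coeff_mult)

lemma coeff_power_1: "coeff (p ^ k) 1 = of_nat k * coeff p 0 ^ (k - 1) * coeff p 1"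
proof (induction k)
  case (Suc k)
  have "coeff (p ^ Suc k) 1 = coeff p 0 * coeff (p ^ k) 1 + coeff p 1 * coeff p 0 ^ k"
    by (simp only: power_Suc coeff_mult_1 coeff_0_power)
  also have "\<dots> = of_nat (Suc k) * coeff p 0 ^ (Suc k - 1) * coeff p 1"
    using Suc.IH by (cases k) (simp_all add: algebra_simps)
  finally show ?case .
qed simp

lemma peak_weight_insert_max:
  fixes x y \<alpha> \<beta> :: "'a::field_char_0"
  assumes p: "\<sigma> permutes {1..n}" and j: "j \<le> n" and n: "1 \<le> n"
  defines "W \<equiv> peak_weight n x y \<alpha> \<beta> \<sigma>" and "u \<equiv> (x + y) / 2"
  shows "peak_weight (Suc n) x y \<alpha> \<beta> (insert_max n \<sigma> j) =
    (if j = 0 then \<alpha> * u * W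
     else if j = n then \<beta> * u * W
     else if is_peak n \<sigma> j \<or> is_peak n \<sigma> (Suc j) then u * W
     else (x * y) ^ Suc (peaks n \<sigma>) * u ^ (n - 2 * peaks n \<sigma> - 2)
            * \<alpha> ^ (LRmin n \<sigma> - 1) * \<beta> ^ (RLmin n \<sigma> - 1))"
proof -
  define k where "k = peaks n \<sigma>"
  define AB where "AB = \<alpha> ^ (LRmin n \<sigma> - 1) * \<beta> ^ (RLmin n \<sigma> - 1)"
  have "2 * k \<le> n - 1" unfolding k_def by (rule double_peaks_le)
  then have same: "Suc n - 2 * k - 1 = Suc (n - 2 * k - 1)"
    and fresh: "Suc n - 2 * Suc k - 1 = n - 2 * k - 2"
    using n by auto
  have W: "W = (x * y) ^ k * u ^ (n - 2 * k - 1) * AB"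
    by (simp add: W_def peak_weight_def k_def u_def AB_def mult.assoc)
  have LR: "LRmin (Suc n) (insert_max n \<sigma> j) - 1 = (LRmin n \<sigma> - 1) + (if j = 0 then 1 else 0)"
    using LRmin_insert_max[OF p j] LRmin_pos[OF n] by simp
  have RL: "RLmin (Suc n) (insert_max n \<sigma> j) - 1 = (RLmin n \<sigma> - 1) + (if j = n then 1 else 0)"
    using RLmin_insert_max[OF p j] RLmin_pos[OF n] by simp
  have pk: "peaks (Suc n) (insert_max n \<sigma> j) =
      (if j = 0 \<or> j = n \<or> is_peak n \<sigma> j \<or> is_peak n \<sigma> (Suc j) then k else Suc k)"
    using peaks_insert_max[OF p j] by (simp add: k_def)
  show ?thesis
  proof (cases "j = 0 \<or> j = n \<or> is_peak n \<sigma> j \<or> is_peak n \<sigma> (Suc j)")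
    case True
    then have pk_same: "peaks (Suc n) (insert_max n \<sigma> j) = k"
      using pk by simp
    show ?thesis
      using True n unfolding peak_weight_def LR RL pk_same same
      by (auto simp: W AB_def u_def algebra_simps)
  next
    case False
    then show ?thesis
      unfolding peak_weight_def LR RL pk
      by (simp add: fresh AB_def u_def k_def mult.assoc)
  qed
qed

lemma descent_weight_insert_max:
  fixes x y \<alpha> \<beta> :: "'a::field_char_0"
  assumes p: "\<sigma> permutes {1..n}" and j: "j \<le> n" and n: "1 \<le> n"
  defines "W \<equiv> descent_weight n x y \<alpha> \<beta> \<sigma>" and "c \<equiv> (\<alpha> + \<beta>) / 2"
  shows "descent_weight (Suc n) x y \<alpha> \<beta> (insert_max n \<sigma> j) =
    (if j = 0 then c * x * W
     else if j = n then c * y * W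
     else if \<sigma> (Suc j) < \<sigma> j then y * W
     else x * W)"
proof -
  have minima: "LRmin (Suc n) (insert_max n \<sigma> j) + RLmin (Suc n) (insert_max n \<sigma> j) - 2
      = (LRmin n \<sigma> + RLmin n \<sigma> - 2) + (if j = 0 \<or> j = n then 1 else 0)"
    using LRmin_insert_max[OF p j] RLmin_insert_max[OF p j] LRmin_pos[of n \<sigma>] RLmin_pos[of n \<sigma>] n
    by auto
  have ds: "des (Suc n) (insert_max n \<sigma> j) =
      (if j = n \<or> (1 \<le> j \<and> \<sigma> (Suc j) < \<sigma> j) then des n \<sigma> else Suc (des n \<sigma>))"
    by (rule des_insert_max[OF p j n])
  show ?thesis
  proof (cases "j = n \<or> (1 \<le> j \<and> \<sigma> (Suc j) < \<sigma> j)")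
    case True
    have "Suc n - des n \<sigma> - 1 = Suc (n - des n \<sigma> - 1)"
      using des_le[of n \<sigma>] n by linarith
    then show ?thesis
      using True n unfolding descent_weight_def minima ds
      by (auto simp: W_def c_def descent_weight_def algebra_simps)
  next
    case False
    then show ?thesis
      using n unfolding descent_weight_def minima ds
      by (auto simp: W_def c_def descent_weight_def algebra_simps)
  qed
qed

lemma sum_split_ends:
  fixes n :: nat
  assumes "1 \<le> n"
  shows "(\<Sum>j = 0..n. f j) = f 0 + f n + (\<Sum>j = 1..n - 1. f j)"
proof -
  have "{0..n} = insert 0 (insert n {1..n - 1})" "0 \<notin> insert n {1..n - 1}" "n \<notin> {1..n - 1}"
    using assms by auto
  then show ?thesis by (simp add: add.assoc)
qed

lemma sum_if_const:
  assumes "finite A"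
  shows "(\<Sum>j\<in>A. if P j then a else b) =
           of_nat (card {j \<in> A. P j}) * a + of_nat (card A - card {j \<in> A. P j}) * b"
proof -
  have "card (A - {j \<in> A. P j}) = card A - card {j \<in> A. P j}"
    using assms by (intro card_Diff_subset) auto
  moreover have "A \<inter> {j. P j} = {j \<in> A. P j}" "A \<inter> - {j. P j} = A - {j \<in> A. P j}"
    by auto
  ultimately show ?thesis
    using sum.If_cases[OF assms, of P "\<lambda>_. a" "\<lambda>_. b"] by simp
qed

lemma coeff_peak_weight_poly_1:
  fixes x y \<alpha> \<beta> :: "'a::field_char_0" and n :: nat and \<sigma> :: "nat \<Rightarrow> nat"
  defines "u \<equiv> (x + y) / 2" and "k \<equiv> peaks n \<sigma>"
  shows "x * y * coeff (peak_weight_poly n x y \<alpha> \<beta> \<sigma>) 1 =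
    of_nat (2 * k) * (u * peak_weight n x y \<alpha> \<beta> \<sigma>)
      + of_nat (n - 2 * k - 1) * ((x * y) ^ Suc k * u ^ (n - 2 * k - 2)
          * \<alpha> ^ (LRmin n \<sigma> - 1) * \<beta> ^ (RLmin n \<sigma> - 1))"
proof -
  define m where "m = n - 2 * k - 1"
  define w where "w = x * y"
  define AB where "AB = \<alpha> ^ (LRmin n \<sigma> - 1) * \<beta> ^ (RLmin n \<sigma> - 1)"
  have "coeff (peak_weight_poly n x y \<alpha> \<beta> \<sigma>) 1 =
      AB * (w ^ k * (of_nat m * u ^ (m - 1)) + of_nat k * w ^ (k - 1) * (x + y) * u ^ m)"
    unfolding peak_weight_poly_def coeff_smult coeff_mult_1 coeff_power_1 coeff_0_power
    by (simp add: k_def m_def u_def AB_def w_def)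
  also have "x + y = 2 * u"
    by (simp add: u_def)
  finally have "w * coeff (peak_weight_poly n x y \<alpha> \<beta> \<sigma>) 1 =
      of_nat m * (w * w ^ k * u ^ (m - 1) * AB) + 2 * (w * (of_nat k * w ^ (k - 1))) * u * u ^ m * AB"
    by (simp add: algebra_simps)
  also have "w * (of_nat k * w ^ (k - 1)) = of_nat k * w ^ k"
    by (cases k) simp_all
  finally show ?thesis
    by (simp add: peak_weight_def w_def m_def AB_def u_def k_def algebra_simps)
qed

lemma coeff_descent_weight_poly_1:
  fixes x y \<alpha> \<beta> :: "'a::field_char_0"
  shows "x * y * coeff (descent_weight_poly n x y \<alpha> \<beta> \<sigma>) 1 =
    of_nat (des n \<sigma>) * (y * descent_weight n x y \<alpha> \<beta> \<sigma>)
      + of_nat (n - des n \<sigma> - 1) * (x * descent_weight n x y \<alpha> \<beta> \<sigma>)"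
proof -
  define d where "d = des n \<sigma>"
  define e where "e = n - d - 1"
  define C where "C = ((\<alpha> + \<beta>) / 2) ^ (LRmin n \<sigma> + RLmin n \<sigma> - 2)"
  have "coeff (descent_weight_poly n x y \<alpha> \<beta> \<sigma>) 1 =
      C * (x ^ d * (of_nat e * y ^ (e - 1)) + of_nat d * x ^ (d - 1) * y ^ e)"
    unfolding descent_weight_poly_def coeff_smult coeff_mult_1 coeff_power_1 coeff_0_power
    by (simp add: d_def e_def C_def)
  then have "x * y * coeff (descent_weight_poly n x y \<alpha> \<beta> \<sigma>) 1 =
      C * ((x * x ^ d) * (y * (of_nat e * y ^ (e - 1))) + (x * (of_nat d * x ^ (d - 1))) * (y * y ^ e))"
    by (simp add: algebra_simps)
  also have "x * (of_nat d * x ^ (d - 1)) = of_nat d * x ^ d"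
    by (cases d) simp_all
  also have "y * (of_nat e * y ^ (e - 1)) = of_nat e * y ^ e"
    by (cases e) simp_all
  finally show ?thesis
    by (simp add: descent_weight_def d_def e_def C_def algebra_simps)
qed

lemma sum_peak_weight_insert_max:
  fixes x y \<alpha> \<beta> :: "'a::field_char_0"
  assumes p: "\<sigma> permutes {1..n}" and n: "1 \<le> n"
  shows "(\<Sum>j = 0..n. peak_weight (Suc n) x y \<alpha> \<beta> (insert_max n \<sigma> j)) =
    (\<alpha> + \<beta>) * ((x + y) / 2) * peak_weight n x y \<alpha> \<beta> \<sigma>
      + x * y * coeff (peak_weight_poly n x y \<alpha> \<beta> \<sigma>) 1"
proof -
  define W where "W = peak_weight n x y \<alpha> \<beta> \<sigma>"
  define u where "u = (x + y) / (2::'a)"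
  define V where "V = (x * y) ^ Suc (peaks n \<sigma>) * u ^ (n - 2 * peaks n \<sigma> - 2)
    * \<alpha> ^ (LRmin n \<sigma> - 1) * \<beta> ^ (RLmin n \<sigma> - 1)"
  have "(\<Sum>j = 1..n - 1. peak_weight (Suc n) x y \<alpha> \<beta> (insert_max n \<sigma> j)) =
      (\<Sum>j = 1..n - 1. if is_peak n \<sigma> j \<or> is_peak n \<sigma> (Suc j) then u * W else V)"
  proof (rule sum.cong)
    fix j assume "j \<in> {1..n - 1}"
    then have j: "j \<le> n" "j \<noteq> 0" "j \<noteq> n" by auto
    then show "peak_weight (Suc n) x y \<alpha> \<beta> (insert_max n \<sigma> j) =
        (if is_peak n \<sigma> j \<or> is_peak n \<sigma> (Suc j) then u * W else V)"
      using peak_weight_insert_max[OF p j(1) n, of x y \<alpha> \<beta>] by (simp add: W_def u_def V_def)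
  qed simp
  also have "\<dots> = x * y * coeff (peak_weight_poly n x y \<alpha> \<beta> \<sigma>) 1"
    unfolding sum_if_const[OF finite_atLeastAtMost] card_gaps_next_to_peak coeff_peak_weight_poly_1
    by (simp add: W_def u_def V_def)
  finally show ?thesis
    using peak_weight_insert_max[OF p _ n, of 0 x y \<alpha> \<beta>] peak_weight_insert_max[OF p _ n, of n x y \<alpha> \<beta>] n
    unfolding sum_split_ends[OF n]
    by (simp add: W_def u_def algebra_simps)
qed

lemma sum_descent_weight_insert_max:
  fixes x y \<alpha> \<beta> :: "'a::field_char_0"
  assumes p: "\<sigma> permutes {1..n}" and n: "1 \<le> n"
  shows "(\<Sum>j = 0..n. descent_weight (Suc n) x y \<alpha> \<beta> (insert_max n \<sigma> j)) =
    (\<alpha> + \<beta>) * ((x + y) / 2) * descent_weight n x y \<alpha> \<beta> \<sigma>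
      + x * y * coeff (descent_weight_poly n x y \<alpha> \<beta> \<sigma>) 1"
proof -
  define W where "W = descent_weight n x y \<alpha> \<beta> \<sigma>"
  have "(\<Sum>j = 1..n - 1. descent_weight (Suc n) x y \<alpha> \<beta> (insert_max n \<sigma> j)) =
      (\<Sum>j = 1..n - 1. if \<sigma> (Suc j) < \<sigma> j then y * W else x * W)"
  proof (rule sum.cong)
    fix j assume "j \<in> {1..n - 1}"
    then have j: "j \<le> n" "j \<noteq> 0" "j \<noteq> n" by auto
    then show "descent_weight (Suc n) x y \<alpha> \<beta> (insert_max n \<sigma> j) =
        (if \<sigma> (Suc j) < \<sigma> j then y * W else x * W)"
      using descent_weight_insert_max[OF p j(1) n, of x y \<alpha> \<beta>] by (simp add: W_def)
  qed simp
  also have "\<dots> = x * y * coeff (descent_weight_poly n x y \<alpha> \<beta> \<sigma>) 1"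
    unfolding sum_if_const[OF finite_atLeastAtMost] des_eq_card[symmetric] coeff_descent_weight_poly_1
    by (simp add: W_def)
  finally show ?thesis
    using descent_weight_insert_max[OF p _ n, of 0 x y \<alpha> \<beta>]
      descent_weight_insert_max[OF p _ n, of n x y \<alpha> \<beta>] n
    unfolding sum_split_ends[OF n]
    by (simp add: W_def algebra_simps)
qed

lemma sum_peak_weight_Suc:
  fixes x y \<alpha> \<beta> :: "'a::field_char_0"
  assumes "1 \<le> n"
  shows "(\<Sum>\<tau> | \<tau> permutes {1..Suc n}. peak_weight (Suc n) x y \<alpha> \<beta> \<tau>) =
    (\<alpha> + \<beta>) * ((x + y) / 2) * (\<Sum>\<sigma> | \<sigma> permutes {1..n}. peak_weight n x y \<alpha> \<beta> \<sigma>)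
      + x * y * coeff (\<Sum>\<sigma> | \<sigma> permutes {1..n}. peak_weight_poly n x y \<alpha> \<beta> \<sigma>) 1"
  unfolding sum_permutes_Suc coeff_sum sum_distrib_left sum.distrib[symmetric]
  using assms by (intro sum.cong) (simp_all add: sum_peak_weight_insert_max)

lemma sum_descent_weight_Suc:
  fixes x y \<alpha> \<beta> :: "'a::field_char_0"
  assumes "1 \<le> n"
  shows "(\<Sum>\<tau> | \<tau> permutes {1..Suc n}. descent_weight (Suc n) x y \<alpha> \<beta> \<tau>) =
    (\<alpha> + \<beta>) * ((x + y) / 2) * (\<Sum>\<sigma> | \<sigma> permutes {1..n}. descent_weight n x y \<alpha> \<beta> \<sigma>)
      + x * y * coeff (\<Sum>\<sigma> | \<sigma> permutes {1..n}. descent_weight_poly n x y \<alpha> \<beta> \<sigma>) 1"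
  unfolding sum_permutes_Suc coeff_sum sum_distrib_left sum.distrib[symmetric]
  using assms by (intro sum.cong) (simp_all add: sum_descent_weight_insert_max)

lemma sum_peak_weight_eq_sum_descent_weight:
  fixes x y \<alpha> \<beta> :: "'a::field_char_0"
  assumes "1 \<le> n"
  shows "(\<Sum>\<sigma> | \<sigma> permutes {1..n}. peak_weight n x y \<alpha> \<beta> \<sigma>) =
         (\<Sum>\<sigma> | \<sigma> permutes {1..n}. descent_weight n x y \<alpha> \<beta> \<sigma>)"
  using assms
proof (induction n arbitrary: x y rule: nat_induct_at_least)
  case base
  have "{\<sigma>. \<sigma> permutes {1..1::nat}} = {id}"
    by simp
  moreover have "{i \<in> {1..1}. is_LRmin id i} = {1}" "{i \<in> {1..1}. is_RLmin 1 id i} = {1}"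
    by (auto simp: is_LRmin_def is_RLmin_def)
  then have "LRmin 1 id = 1" "RLmin 1 id = 1"
    by (simp_all only: LRmin_eq_card RLmin_eq_card card_1_singleton_iff) auto
  moreover have "peaks 1 id = 0" "des 1 id = 0"
    by (simp_all add: peaks_def des_def)
  ultimately show ?case
    by (simp add: peak_weight_def descent_weight_def id_def)
next
  case (Suc n)
  have "poly (\<Sum>\<sigma> | \<sigma> permutes {1..n}. peak_weight_poly n x y \<alpha> \<beta> \<sigma>) =
        poly (\<Sum>\<sigma> | \<sigma> permutes {1..n}. descent_weight_poly n x y \<alpha> \<beta> \<sigma>)"
    using Suc.IH by (simp add: fun_eq_iff poly_sum poly_peak_weight_poly poly_descent_weight_poly)
  then have "(\<Sum>\<sigma> | \<sigma> permutes {1..n}. peak_weight_poly n x y \<alpha> \<beta> \<sigma>) =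
             (\<Sum>\<sigma> | \<sigma> permutes {1..n}. descent_weight_poly n x y \<alpha> \<beta> \<sigma>)"
    by (rule poly_eq_poly_eq_iff[THEN iffD1])
  then show ?case
    unfolding sum_peak_weight_Suc[OF Suc.hyps] sum_descent_weight_Suc[OF Suc.hyps] Suc.IH
    by (rule arg_cong)
qed

theorem theorem1p9:
  fixes x y \<alpha> \<beta> :: "'a :: field_char_0" and n :: nat
  assumes "n \<ge> 1"
  shows "(\<Sum>\<sigma> \<in> {\<sigma>. \<sigma> permutes {1..n}}.
            (x*y) ^ peaks n \<sigma> * ((x+y)/2) ^ (n - 2 * peaks n \<sigma> - 1)
            * \<alpha> ^ (LRmin n \<sigma> - 1) * \<beta> ^ (RLmin n \<sigma> - 1))
       = (\<Sum>\<sigma> \<in> {\<sigma>. \<sigma> permutes {1..n}}.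
            x ^ des n \<sigma> * y ^ (n - des n \<sigma> - 1)
            * ((\<alpha>+\<beta>)/2) ^ (LRmin n \<sigma> + RLmin n \<sigma> - 2))"
  using sum_peak_weight_eq_sum_descent_weight[OF assms, of x y \<alpha> \<beta>]
  by (simp add: peak_weight_def descent_weight_def)

end
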